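(* (a) Let $(\mathbb{L},\Box,\Diamond)$ be an $\mathcal{L}$-algebra. If $i:\mathbb{L}\to\mathbf{A}$ is an $\mathbf{A}$-ideal, then so is $i^{-\Box}$. (b) If $i:\mathbf{Fm}\to\mathbf{A}$ is a proper $\mathbf{A}$-ideal of the Lindenbaum–Tarski algebra $\mathbf{Fm}$, then so is $i^{-\Box}$.
   Context: $\mathbf{A}=(D,1,0,\vee,\wedge,\otimes,\to)$ is a fixed complete lattice with top $1$ and bottom $0$, frame-distributive and dually frame-distributive, with a commutative associative $\otimes$ residuated by $\to$, and $1\to\alpha=\alpha$ for all $\alpha$. An $\mathcal{L}$-algebra $(\mathbb{L},\Box,\Diamond)$ is a bounded lattice with unary $\Box$ preserving finite meets ($\Box\top=\top$, $\Box(a\wedge b)=\Box a\wedge\Box b$) and unary $\Diamond$ preserving finite joins ($\Diamond\bot=\bot$, $\Diamond(a\vee b)=\Diamond a\vee\Diamond b$). An $\mathbf{A}$-ideal of $\mathbb{L}$ is $i:\mathbb{L}\to\mathbf{A}$ with $i(\bot)=1$ and $i(a\vee b)=i(a)\wedge i(b)$ for all $a,b$; it is proper if moreover $i(\top)=0$. For $k:\mathbb{L}\to\mathbf{A}$, $k^{-\Box}(a)=\bigvee\{k(b)\mid a\le\Box b\}$. $\mathcal{L}$: $\varphi::=\bot\mid\top\mid p\mid\varphi\wedge\varphi\mid\varphi\vee\varphi\mid\Box\varphi\mid\Diamond\varphi$ over a countable set of atoms. $\mathbf{L}$ is the least set of sequents containing $p\vdash p$, $\bot\vdash p$, $p\vdash\top$,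 $p\vdash p\vee q$, $q\vdash p\vee q$, $p\wedge q\vdash p$, $p\wedge q\vdash q$, $\top\vdash\Box\top$, $\Box p\wedge\Box q\vdash\Box(p\wedge q)$, $\Diamond\bot\vdash\bot$, $\Diamond(p\vee q)\vdash\Diamond p\vee\Diamond q$ and closed under cut, uniform substitution, from $\chi\vdash\phi,\chi\vdash\psi$ infer $\chi\vdash\phi\wedge\psi$, from $\phi\vdash\chi,\psi\vdash\chi$ infer $\phi\vee\psi\vdash\chi$, and from $\phi\vdash\psi$ infer $\Box\phi\vdash\Box\psi$ and $\Diamond\phi\vdash\Diamond\psi$. $\mathbf{Fm}$ is the Lindenbaum–Tarski algebra of $\mathcal{L}$-formulas modulo $\mathbf{L}$ (ordered by derivability), which is an $\mathcal{L}$-algebra. *)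

theory Defs
  imports Main
begin

definition A_algebra :: "('a::complete_lattice \<Rightarrow> 'a \<Rightarrow> 'a) \<Rightarrow> ('a \<Rightarrow> 'a \<Rightarrow> 'a) \<Rightarrow> bool" where
  "A_algebra tens imp \<longleftrightarrow>
     (\<forall>(a::'a) S. inf a (Sup S) = (SUP s\<in>S. inf a s)) \<and>
     (\<forall>(a::'a) S. sup a (Inf S) = (INF s\<in>S. sup a s)) \<and>
     (\<forall>a b. tens a b = tens b a) \<and>
     (\<forall>a b c. tens (tens a b) c = tens a (tens b c)) \<and>
     (\<forall>a b c. tens a b \<le> c \<longleftrightarrow> a \<le> imp b c) \<and>
     (\<forall>a. imp top a = a)"

definition L_algebra :: "('l::bounded_lattice \<Rightarrow> 'l) \<Rightarrow> ('l \<Rightarrow> 'l) \<Rightarrow> bool" where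
  "L_algebra box dia \<longleftrightarrow>
     box top = top \<and> (\<forall>a b. box (inf a b) = inf (box a) (box b)) \<and>
     dia bot = bot \<and> (\<forall>a b. dia (sup a b) = sup (dia a) (dia b))"

definition A_ideal :: "('l::bounded_lattice \<Rightarrow> 'a::complete_lattice) \<Rightarrow> bool" where
  "A_ideal i \<longleftrightarrow> i bot = top \<and> (\<forall>a b. i (sup a b) = inf (i a) (i b))"

definition proper_A_ideal :: "('l::bounded_lattice \<Rightarrow> 'a::complete_lattice) \<Rightarrow> bool" where
  "proper_A_ideal i \<longleftrightarrow> A_ideal i \<and> i top = bot"

definition inv_box :: "('l::order \<Rightarrow> 'l) \<Rightarrow> ('l \<Rightarrow> 'a::complete_lattice) \<Rightarrow> 'l \<Rightarrow> 'a" where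
  "inv_box box k a = Sup {k b | b. a \<le> box b}"

datatype form = FBot | FTop | Atom nat | FAnd form form | FOr form form
  | FBox form | FDia form

primrec subst :: "(nat \<Rightarrow> form) \<Rightarrow> form \<Rightarrow> form" where
  "subst s FBot = FBot"
| "subst s FTop = FTop"
| "subst s (Atom n) = s n"
| "subst s (FAnd a b) = FAnd (subst s a) (subst s b)"
| "subst s (FOr a b) = FOr (subst s a) (subst s b)"
| "subst s (FBox a) = FBox (subst s a)"
| "subst s (FDia a) = FDia (subst s a)"

abbreviation "p0 \<equiv> Atom 0"
abbreviation "q0 \<equiv> Atom 1"

inductive deriv :: "form \<Rightarrow> form \<Rightarrow> bool" where
  ax_id: "deriv p0 p0"
| ax_bot: "deriv FBot p0"
| ax_top: "deriv p0 FTop"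
| ax_or1: "deriv p0 (FOr p0 q0)"
| ax_or2: "deriv q0 (FOr p0 q0)"
| ax_and1: "deriv (FAnd p0 q0) p0"
| ax_and2: "deriv (FAnd p0 q0) q0"
| ax_boxtop: "deriv FTop (FBox FTop)"
| ax_boxand: "deriv (FAnd (FBox p0) (FBox q0)) (FBox (FAnd p0 q0))"
| ax_diabot: "deriv (FDia FBot) FBot"
| ax_diaor: "deriv (FDia (FOr p0 q0)) (FOr (FDia p0) (FDia q0))"
| cut: "deriv a c \<Longrightarrow> deriv c b \<Longrightarrow> deriv a b"
| substR: "deriv a b \<Longrightarrow> deriv (subst s a) (subst s b)"
| andI: "deriv c a \<Longrightarrow> deriv c b \<Longrightarrow> deriv c (FAnd a b)"
| orE: "deriv a c \<Longrightarrow> deriv b c \<Longrightarrow> deriv (FOr a b) c"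
| boxM: "deriv a b \<Longrightarrow> deriv (FBox a) (FBox b)"
| diaM: "deriv a b \<Longrightarrow> deriv (FDia a) (FDia b)"

definition sb2 :: "form \<Rightarrow> form \<Rightarrow> nat \<Rightarrow> form" where
  "sb2 a b n = (if n = 0 then a else b)"

lemma d_refl: "deriv a a"
  using substR[OF ax_id, of "sb2 a a"] by (simp add: sb2_def)
lemma d_bot: "deriv FBot a"
  using substR[OF ax_bot, of "sb2 a a"] by (simp add: sb2_def)
lemma d_top: "deriv a FTop"
  using substR[OF ax_top, of "sb2 a a"] by (simp add: sb2_def)
lemma d_or1: "deriv a (FOr a b)"
  using substR[OF ax_or1, of "sb2 a b"] by (simp add: sb2_def)
lemma d_or2: "deriv b (FOr a b)"
  using substR[OF ax_or2, of "sb2 a b"] by (simp add: sb2_def)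
lemma d_and1: "deriv (FAnd a b) a"
  using substR[OF ax_and1, of "sb2 a b"] by (simp add: sb2_def)
lemma d_and2: "deriv (FAnd a b) b"
  using substR[OF ax_and2, of "sb2 a b"] by (simp add: sb2_def)

definition eqv :: "form \<Rightarrow> form \<Rightarrow> bool" where
  "eqv a b \<longleftrightarrow> deriv a b \<and> deriv b a"

lemma equivp_eqv: "equivp eqv"
  unfolding eqv_def by (rule equivpI) (auto simp: reflp_def symp_def transp_def intro: d_refl cut)

quotient_type fm = form / eqv
  by (rule equivp_eqv)

instantiation fm :: bounded_lattice
begin

lift_definition less_eq_fm :: "fm \<Rightarrow> fm \<Rightarrow> bool" is deriv
  unfolding eqv_def by (blast intro: cut)

definition less_fm :: "fm \<Rightarrow> fm \<Rightarrow> bool" where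
  "less_fm a b \<longleftrightarrow> a \<le> b \<and> \<not> b \<le> a"

lift_definition inf_fm :: "fm \<Rightarrow> fm \<Rightarrow> fm" is FAnd
  unfolding eqv_def by (blast intro: cut andI d_and1 d_and2)

lift_definition sup_fm :: "fm \<Rightarrow> fm \<Rightarrow> fm" is FOr
  unfolding eqv_def by (blast intro: cut orE d_or1 d_or2)

lift_definition bot_fm :: fm is FBot .
lift_definition top_fm :: fm is FTop .

instance
proof
  fix x y z :: fm
  show "(x < y) = (x \<le> y \<and> \<not> y \<le> x)" by (simp add: less_fm_def)
  show "x \<le> x" by transfer (rule d_refl)
  show "x \<le> y \<Longrightarrow> y \<le> z \<Longrightarrow> x \<le> z" by transfer (rule cut)
  show "x \<le> y \<Longrightarrow> y \<le> x \<Longrightarrow> x = y" by transfer (simp add: eqv_def)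
  show "inf x y \<le> x" by transfer (rule d_and1)
  show "inf x y \<le> y" by transfer (rule d_and2)
  show "x \<le> y \<Longrightarrow> x \<le> z \<Longrightarrow> x \<le> inf y z" by transfer (rule andI)
  show "x \<le> sup x y" by transfer (rule d_or1)
  show "y \<le> sup x y" by transfer (rule d_or2)
  show "y \<le> x \<Longrightarrow> z \<le> x \<Longrightarrow> sup y z \<le> x" by transfer (rule orE)
  show "bot \<le> x" by transfer (rule d_bot)
  show "x \<le> top" by transfer (rule d_top)
qed

end

lift_definition box_fm :: "fm \<Rightarrow> fm" is FBox
  unfolding eqv_def by (blast intro: boxM)

lift_definition dia_fm :: "fm \<Rightarrow> fm" is FDia
  unfolding eqv_def by (blast intro: diaM)

end

theory Submission
  imports Defs "HOL-Library.Lattice_Constructions"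
begin

(* For (a): by frame distributivity the meet of i^{-box} a and i^{-box} c is the join of
   the meets i b \<sqinter> i d = i (b \<squnion> d) over a \<le> box b and c \<le> box d, and monotonicity of box
   gives a \<squnion> c \<le> box (b \<squnion> d).
   For (b) it remains to see i^{-box} top = i top, i.e. that top \<le> box b forces b = top in Fm.
   Adjoin a fresh top T to Fm, with box T = T and dia T = dia top: this is again an L-algebra,
   in which box x = T only for x = T. Evaluating a formula there with the canonical valuation
   and collapsing T to top recovers its class in Fm, so soundness of L transfers
   top \<turnstile> box \<phi> into top \<turnstile> \<phi>. *)

lemma L_algebra_box_mono:
  assumes "L_algebra box dia"
  shows "mono box"
  using assms unfolding L_algebra_def by (metis inf.absorb_iff1 monoI)

lemma L_algebra_dia_mono:
  assumes "L_algebra box dia"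
  shows "mono dia"
  using assms unfolding L_algebra_def by (metis sup.absorb_iff2 monoI)

lemma inv_box_antimono: "a \<le> c \<Longrightarrow> inv_box box k c \<le> inv_box box k a"
  unfolding inv_box_def by (rule Sup_subset_mono) auto

lemma inv_box_bot:
  fixes box :: "'l::order_bot \<Rightarrow> 'l"
  assumes "k bot = top"
  shows "inv_box box k bot = top"
proof -
  have "k bot \<in> {k b | b. bot \<le> box b}" by auto
  then show ?thesis unfolding inv_box_def using assms by (metis Sup_upper top_unique)
qed

lemma inf_Sup_Sup:
  fixes S T :: "'a::complete_lattice set"
  assumes frame: "\<And>(a::'a) S. inf a (Sup S) = (SUP s\<in>S. inf a s)"
  shows "inf (Sup S) (Sup T) = (SUP s\<in>S. SUP t\<in>T. inf s t)"
proof -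
  have "inf (Sup S) (Sup T) = inf (Sup T) (Sup S)" by (rule inf.commute)
  also have "\<dots> = (SUP s\<in>S. inf (Sup T) s)" by (rule frame)
  also have "\<dots> = (SUP s\<in>S. SUP t\<in>T. inf s t)" by (simp add: frame inf.commute)
  finally show ?thesis .
qed

lemma A_ideal_inv_box:
  fixes i :: "'l::bounded_lattice \<Rightarrow> 'a::complete_lattice"
  assumes frame: "\<And>(a::'a) S. inf a (Sup S) = (SUP s\<in>S. inf a s)"
    and "mono box" and "A_ideal i"
  shows "A_ideal (inv_box box i)"
proof -
  have i_bot: "i bot = top" and i_sup: "\<And>a b. i (sup a b) = inf (i a) (i b)"
    using \<open>A_ideal i\<close> by (auto simp: A_ideal_def)
  have "inf (inv_box box i a) (inv_box box i c) \<le> inv_box box i (sup a c)" for a c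
  proof -
    have "inf (i b) (i d) \<le> inv_box box i (sup a c)" if "a \<le> box b" "c \<le> box d" for b d
    proof -
      have "sup a c \<le> box (sup b d)"
        using that monoD[OF \<open>mono box\<close>] by (meson le_supI order_trans sup_ge1 sup_ge2)
      then show ?thesis unfolding inv_box_def i_sup[symmetric] by (blast intro: Sup_upper)
    qed
    then show ?thesis
      unfolding inv_box_def inf_Sup_Sup[OF frame] by (intro SUP_least) blast
  qed
  then have "inv_box box i (sup a c) = inf (inv_box box i a) (inv_box box i c)" for a c
    by (simp add: antisym inv_box_antimono)
  then show ?thesis by (simp add: A_ideal_def inv_box_bot i_bot)
qed

primrec eval :: "('l::bounded_lattice \<Rightarrow> 'l) \<Rightarrow> ('l \<Rightarrow> 'l) \<Rightarrow> (nat \<Rightarrow> 'l) \<Rightarrow> form \<Rightarrow> 'l" where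
  "eval box dia v FBot = bot"
| "eval box dia v FTop = top"
| "eval box dia v (Atom n) = v n"
| "eval box dia v (FAnd a b) = inf (eval box dia v a) (eval box dia v b)"
| "eval box dia v (FOr a b) = sup (eval box dia v a) (eval box dia v b)"
| "eval box dia v (FBox a) = box (eval box dia v a)"
| "eval box dia v (FDia a) = dia (eval box dia v a)"

lemma eval_subst: "eval box dia v (subst s a) = eval box dia (\<lambda>n. eval box dia v (s n)) a"
  by (induction a) simp_all

lemma deriv_sound:
  assumes "L_algebra box dia" and "deriv a b"
  shows "eval box dia v a \<le> eval box dia v b"
  using \<open>deriv a b\<close>
proof (induction arbitrary: v rule: deriv.induct)
  case (substR a b s)
  then show ?case by (simp add: eval_subst)
next
  case (boxM a b)
  then show ?case using L_algebra_box_mono[OF assms(1)] by (simp add: monoD)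
next
  case (diaM a b)
  then show ?case using L_algebra_dia_mono[OF assms(1)] by (simp add: monoD)
qed (use assms in \<open>auto simp: L_algebra_def intro: order_trans\<close>)

lemma box_fm_mono: "mono box_fm"
  by (rule monoI, transfer) (rule boxM)

lemma dia_fm_mono: "mono dia_fm"
  by (rule monoI, transfer) (rule diaM)

lemma L_algebra_fm: "L_algebra box_fm dia_fm"
proof -
  have "top \<le> box_fm top"
    by transfer (rule ax_boxtop)
  moreover have "inf (box_fm a) (box_fm b) \<le> box_fm (inf a b)" for a b
    by transfer (use substR[OF ax_boxand, of "sb2 a b" for a b] in \<open>simp add: sb2_def\<close>)
  moreover have "dia_fm bot \<le> bot"
    by transfer (rule ax_diabot)
  moreover have "dia_fm (sup a b) \<le> sup (dia_fm a) (dia_fm b)" for a b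
    by transfer (use substR[OF ax_diaor, of "sb2 a b" for a b] in \<open>simp add: sb2_def\<close>)
  ultimately show ?thesis
    unfolding L_algebra_def
    by (metis antisym top_unique bot_unique mono_inf mono_sup box_fm_mono dia_fm_mono)
qed

lemma eval_fm_canonical: "eval box_fm dia_fm (\<lambda>n. abs_fm (Atom n)) a = abs_fm a"
  by (induction a)
    (simp_all add: bot_fm.abs_eq top_fm.abs_eq inf_fm.abs_eq sup_fm.abs_eq box_fm.abs_eq dia_fm.abs_eq)

instance top :: (bounded_lattice) bounded_lattice
  by standard (simp add: bot_top_def less_eq_top_def split: top.splits)

definition lift_dia :: "('l::top \<Rightarrow> 'l) \<Rightarrow> 'l top \<Rightarrow> 'l top" where
  "lift_dia dia x = top.Value (dia (case x of top.Value a \<Rightarrow> a | top.Top \<Rightarrow> top))"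

definition drop_top :: "'l::top top \<Rightarrow> 'l" where
  "drop_top x = (case x of top.Value a \<Rightarrow> a | top.Top \<Rightarrow> top)"

lemma L_algebra_lift:
  assumes "L_algebra box dia"
  shows "L_algebra (map_top box) (lift_dia dia)"
proof -
  have "dia a \<le> dia top" for a
    using L_algebra_dia_mono[OF assms] by (simp add: monoD)
  then show ?thesis
    using assms
    by (auto simp: L_algebra_def lift_dia_def top_top_def bot_top_def inf_top_def sup_top_def
        sup_absorb1 sup_absorb2 split: top.splits)
qed

lemma drop_top_eval:
  assumes "L_algebra box dia"
  shows "drop_top (eval (map_top box) (lift_dia dia) v a) = eval box dia (drop_top \<circ> v) a"
  using assms
  by (induction a)
    (auto simp: L_algebra_def lift_dia_def drop_top_def top_top_def bot_top_def inf_top_def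
      sup_top_def split: top.splits)

lemma box_fm_reflects_top:
  assumes "box_fm b = top"
  shows "b = top"
proof -
  obtain r where b: "b = abs_fm r"
    using fm.abs_induct[of "\<lambda>b. \<exists>r. b = abs_fm r"] by blast
  let ?v = "\<lambda>n. top.Value (abs_fm (Atom n))"
  let ?eval = "eval (map_top box_fm) (lift_dia dia_fm) ?v"
  have "deriv FTop (FBox r)"
    using assms unfolding b by transfer (simp add: eqv_def)
  then have "top \<le> ?eval (FBox r)"
    using deriv_sound[OF L_algebra_lift[OF L_algebra_fm]] by fastforce
  then have "?eval r = top.Top"
    by (cases "?eval r") (simp_all add: top_top_def)
  then have "drop_top (?eval r) = top"
    by (simp add: drop_top_def)
  then show ?thesis
    unfolding b drop_top_eval[OF L_algebra_fm] by (simp add: comp_def drop_top_def eval_fm_canonical)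
qed

lemma inv_box_fm_top: "inv_box box_fm k top = k top"
proof -
  have "box_fm top = top"
    using L_algebra_fm by (simp add: L_algebra_def)
  then have "{k b | b. top \<le> box_fm b} = {k top}"
    using box_fm_reflects_top by (auto simp: top_unique)
  then show ?thesis by (simp add: inv_box_def)
qed

lemma proper_A_ideal_inv_box_fm:
  fixes i :: "fm \<Rightarrow> 'a::complete_lattice"
  assumes frame: "\<And>(a::'a) S. inf a (Sup S) = (SUP s\<in>S. inf a s)"
    and "proper_A_ideal i"
  shows "proper_A_ideal (inv_box box_fm i)"
  using assms A_ideal_inv_box[OF frame box_fm_mono]
  by (simp add: proper_A_ideal_def inv_box_fm_top)

theorem mainTheorem6:
  fixes tens imp :: "'a::complete_lattice \<Rightarrow> 'a \<Rightarrow> 'a"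
  assumes "A_algebra tens imp"
  shows "(\<forall>(box :: 'l::bounded_lattice \<Rightarrow> 'l) dia (i :: 'l \<Rightarrow> 'a).
            L_algebra box dia \<and> A_ideal i \<longrightarrow> A_ideal (inv_box box i))
       \<and> (\<forall>i :: fm \<Rightarrow> 'a. proper_A_ideal i \<longrightarrow> proper_A_ideal (inv_box box_fm i))"
proof -
  have frame: "\<And>(a::'a) S. inf a (Sup S) = (SUP s\<in>S. inf a s)"
    using assms by (simp add: A_algebra_def)
  show ?thesis
    using A_ideal_inv_box[OF frame L_algebra_box_mono] proper_A_ideal_inv_box_fm[OF frame]
    by blast
qed

end
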